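(* Let $\Sigma$ be a simplicial complex which is oriented with respect to a partial order $\le$ on its vertex set $\Sigma^0$, let $Y$ be a topological space, and let $\Phi,\Psi:\Sigma^0\rightrightarrows Y$ be mappings (to nonempty subsets of $Y$) such that for every $v\in\Sigma^0$, $\Phi(v)\subset\Psi(v)$ and $\Phi(v)$ is contractible in $\Psi(v)$, and such that $\Psi(v)\subset\Phi(u)$ whenever $u,v\in\Sigma^0$ with $u<v$. Then there exists a continuous map $h:|\Sigma|\to Y$ such that $h(|\sigma|)\subset\Psi(\min\sigma)$ for every $\sigma\in\Sigma$.
   Context: A simplicial complex is a collection $\Sigma$ of nonempty finite subsets of a set such that $\tau\in\Sigma$ whenever $\emptyset\ne\tau\subset\sigma\in\Sigma$; its vertex set $\Sigma^0$ is $\bigcup\Sigma$. Its geometric realisation $|\Sigma|$ is obtained by embedding $\Sigma^0$ as a linearly independent subset of a linear space, letting $|\sigma|$ be the convex hull of $\sigma$ and $|\Sigma|=\bigcup_{\sigma\in\Sigma}|\sigma|$, with the Whitehead topology: $U\subset|\Sigma|$ is open iff $U\cap|\sigma|$ is open in $|\sigma|$ for every $\sigma\in\Sigma$. $\Sigma$ is oriented with respect to a partial order $\le$ on $\Sigma^0$ if each simplex is linearly ordered by $\le$; then $\min\sigma$ denotes the least vertex of $\sigma$. A subset $S\subset T$ is contractible in $T$ if there is a homotopy $H:S\times[0,1]\to T$ with $H(y,0)=y$ and $H(y,1)=p$ for all $y\in S$, for some point $p\in T$. *)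

theory Defs
  imports "HOL-Analysis.Analysis"
begin

definition abstract_simplicial_complex :: "'v set set \<Rightarrow> bool" where
  "abstract_simplicial_complex K \<longleftrightarrow>
     (\<forall>\<sigma>\<in>K. \<sigma> \<noteq> {} \<and> finite \<sigma>) \<and>
     (\<forall>\<sigma>\<in>K. \<forall>\<tau>. \<tau> \<noteq> {} \<and> \<tau> \<subseteq> \<sigma> \<longrightarrow> \<tau> \<in> K)"

definition vertices :: "'v set set \<Rightarrow> 'v set" where
  "vertices K = \<Union>K"

text \<open>Geometric simplex |sigma|: the vertices are embedded as the standard basis
  (indicator functions) of the real vector space 'v => real, which is linearly
  independent; |sigma| is their convex hull, i.e. the set of convex combinations
  of the vertices of the (finite) simplex sigma, written out in coordinates.\<close>
definition geom_simplex :: "'v set \<Rightarrow> ('v \<Rightarrow> real) set" where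
  "geom_simplex \<sigma> = {x. (\<forall>v. 0 \<le> x v) \<and> (\<forall>v. v \<notin> \<sigma> \<longrightarrow> x v = 0) \<and> sum x \<sigma> = 1}"

definition realisation :: "'v set set \<Rightarrow> ('v \<Rightarrow> real) set" where
  "realisation K = (\<Union>\<sigma>\<in>K. geom_simplex \<sigma>)"

definition whitehead_topology :: "'v set set \<Rightarrow> ('v \<Rightarrow> real) topology" where
  "whitehead_topology K = topology (\<lambda>U. U \<subseteq> realisation K \<and>
      (\<forall>\<sigma>\<in>K. openin (top_of_set (geom_simplex \<sigma>)) (U \<inter> geom_simplex \<sigma>)))"

definition oriented :: "'v set set \<Rightarrow> ('v \<times> 'v) set \<Rightarrow> bool" where
  "oriented K r \<longleftrightarrow> partial_order_on (vertices K) r \<and>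
     (\<forall>\<sigma>\<in>K. \<forall>u\<in>\<sigma>. \<forall>v\<in>\<sigma>. (u, v) \<in> r \<or> (v, u) \<in> r)"

definition min_vertex :: "('v \<times> 'v) set \<Rightarrow> 'v set \<Rightarrow> 'v" where
  "min_vertex r \<sigma> = (THE v. v \<in> \<sigma> \<and> (\<forall>w\<in>\<sigma>. (v, w) \<in> r))"

definition contractible_in :: "'b topology \<Rightarrow> 'b set \<Rightarrow> 'b set \<Rightarrow> bool" where
  "contractible_in Y S T \<longleftrightarrow>
     (\<exists>H p. p \<in> T \<and>
        continuous_map (prod_topology (subtopology Y S) (top_of_set {0..1::real})) (subtopology Y T) H \<and>
        (\<forall>y\<in>S. H (y, 0) = y \<and> H (y, 1) = p))"

end

theory Submission
  imports Defs
begin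

text \<open>Let \<open>u\<close> be the least vertex of a simplex \<open>\<sigma>\<close> and \<open>\<tau>\<close> the opposite face. Every point
  of \<open>|\<sigma>|\<close> is \<open>s u + (1 - s) z\<close> with \<open>z \<in> |\<tau>|\<close>, and \<open>|\<sigma>|\<close> is a quotient of the cylinder
  \<open>|\<tau>| \<times> [0,1]\<close> (compact onto Hausdorff). By induction \<open>h\<close> maps \<open>|\<tau>|\<close> into
  \<open>\<Psi>(min \<tau>) \<subseteq> \<Phi>(u)\<close>, so \<open>h(s u + (1 - s) z) = H\<^sub>u(h z, s)\<close> is well defined and continuous, where
  \<open>H\<^sub>u\<close> contracts \<open>\<Phi>(u)\<close> to a point \<open>p\<^sub>u\<close> inside \<open>\<Psi>(u)\<close>: at \<open>s = 0\<close> it agrees with \<open>h\<close> on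
  \<open>|\<tau>|\<close>, and at \<open>s = 1\<close> it is \<open>p\<^sub>u\<close> regardless of \<open>z\<close>. Continuity on every simplex is
  continuity for the Whitehead topology.\<close>

lemma finite_chain_has_least:
  assumes "finite S" "S \<noteq> {}" "trans r" "\<forall>u\<in>S. \<forall>v\<in>S. (u, v) \<in> r \<or> (v, u) \<in> r"
  shows "\<exists>v\<in>S. \<forall>w\<in>S. (v, w) \<in> r"
  using assms(1,2,4)
proof (induction S rule: finite_ne_induct)
  case (singleton x)
  then show ?case by auto
next
  case (insert a F)
  then obtain v where v: "v \<in> F" "\<forall>w\<in>F. (v, w) \<in> r" by auto
  show ?case
  proof (cases "(v, a) \<in> r")
    case True
    then show ?thesis using v by auto
  next
    case False
    then have "(a, v) \<in> r" using insert.prems v by auto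
    then have "\<forall>w\<in>F. (a, w) \<in> r" using v \<open>trans r\<close> by (meson transD)
    moreover have "(a, a) \<in> r" using insert.prems by auto
    ultimately show ?thesis by auto
  qed
qed

lemma min_vertex_eqI:
  assumes "antisym r" "u \<in> S" "\<forall>w\<in>S. (u, w) \<in> r"
  shows "min_vertex r S = u"
  unfolding min_vertex_def
  by (rule the_equality) (use assms in \<open>auto dest: antisymD\<close>)

lemma min_vertex_singleton: "(u, u) \<in> r \<Longrightarrow> min_vertex r {u} = u"
  unfolding min_vertex_def by (rule the_equality) auto

lemma min_vertex_least:
  assumes "finite S" "S \<noteq> {}" "trans r" "antisym r" "\<forall>u\<in>S. \<forall>v\<in>S. (u, v) \<in> r \<or> (v, u) \<in> r"
  shows "min_vertex r S \<in> S" "\<forall>w\<in>S. (min_vertex r S, w) \<in> r"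
proof -
  obtain v where "v \<in> S" "\<forall>w\<in>S. (v, w) \<in> r"
    using finite_chain_has_least[OF assms(1,2,3,5)] by blast
  moreover from this have "min_vertex r S = v" using min_vertex_eqI[OF assms(4)] by blast
  ultimately show "min_vertex r S \<in> S" "\<forall>w\<in>S. (min_vertex r S, w) \<in> r" by auto
qed

lemma geom_simplex_support: "x \<in> geom_simplex \<sigma> \<Longrightarrow> {v. x v \<noteq> 0} \<subseteq> \<sigma>"
  by (auto simp: geom_simplex_def)

lemma geom_simplex_coordinate_le_1: "finite \<sigma> \<Longrightarrow> x \<in> geom_simplex \<sigma> \<Longrightarrow> x u \<le> 1"
  using member_le_sum[of u \<sigma> x] by (cases "u \<in> \<sigma>") (auto simp: geom_simplex_def)

lemma geom_simplex_singleton: "geom_simplex {u} = {\<lambda>w. if w = u then 1 else 0}"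
  by (auto simp: geom_simplex_def fun_eq_iff)

lemma compact_geom_simplex:
  assumes "finite \<sigma>"
  shows "compact (geom_simplex \<sigma>)"
proof -
  define B where "B = (\<lambda>v. if v \<in> \<sigma> then {0..1::real} else {0})"
  have "compactin (product_topology (\<lambda>_. euclidean) UNIV) (PiE UNIV B)"
    by (subst compactin_PiE) (auto simp: B_def)
  then have box: "compactin euclidean (PiE UNIV B)"
    by (simp add: euclidean_product_topology)
  have "geom_simplex \<sigma> \<subseteq> PiE UNIV B"
    using geom_simplex_coordinate_le_1[OF assms]
    by (auto simp: B_def geom_simplex_def PiE_def extensional_def)
  moreover have "closed (geom_simplex \<sigma>)"
  proof -
    have "geom_simplex \<sigma> = (\<Inter>v. {x. 0 \<le> x v}) \<inter> (\<Inter>v\<in>-\<sigma>. {x. x v = 0}) \<inter> {x. sum x \<sigma> = 1}"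
      by (auto simp: geom_simplex_def)
    then show ?thesis
      by (simp only:) (intro closed_Int closed_INT ballI closed_Collect_le closed_Collect_eq
          continuous_on_sum continuous_on_const continuous_on_product_coordinates)
  qed
  ultimately have "compactin euclidean (geom_simplex \<sigma>)"
    using closed_compactin[OF box] by auto
  then show ?thesis by simp
qed

lemma Hausdorff_space_fun: "Hausdorff_space (euclidean :: ('a \<Rightarrow> real) topology)"
  by (metis euclidean_product_topology Hausdorff_space_product_topology Hausdorff_space_euclidean)

definition cone_point :: "'v \<Rightarrow> ('v \<Rightarrow> real) \<Rightarrow> real \<Rightarrow> 'v \<Rightarrow> real" where
  "cone_point u z s = (\<lambda>w. if w = u then s else (1 - s) * z w)"

lemma cone_point_in_geom_simplex:
  assumes "finite \<tau>" "u \<notin> \<tau>" "z \<in> geom_simplex \<tau>" "0 \<le> s" "s \<le> 1"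
  shows "cone_point u z s \<in> geom_simplex (insert u \<tau>)"
proof -
  have "sum (cone_point u z s) \<tau> = (1 - s) * sum z \<tau>"
    unfolding sum_distrib_left using assms(2) by (intro sum.cong) (auto simp: cone_point_def)
  then show ?thesis using assms by (auto simp: geom_simplex_def cone_point_def)
qed

lemma geom_simplex_insert_eq_cone:
  assumes "finite \<tau>" "\<tau> \<noteq> {}" "u \<notin> \<tau>"
  shows "geom_simplex (insert u \<tau>) = (\<lambda>p. cone_point u (fst p) (snd p)) ` (geom_simplex \<tau> \<times> {0..1})"
proof
  show "(\<lambda>p. cone_point u (fst p) (snd p)) ` (geom_simplex \<tau> \<times> {0..1}) \<subseteq> geom_simplex (insert u \<tau>)"
    using cone_point_in_geom_simplex[OF assms(1,3)] by auto
next
  show "geom_simplex (insert u \<tau>) \<subseteq> (\<lambda>p. cone_point u (fst p) (snd p)) ` (geom_simplex \<tau> \<times> {0..1})"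
  proof
    fix x assume x: "x \<in> geom_simplex (insert u \<tau>)"
    have xu: "0 \<le> x u" "x u \<le> 1"
      using x geom_simplex_coordinate_le_1[OF _ x] assms(1) by (auto simp: geom_simplex_def)
    have sum_\<tau>: "sum x \<tau> = 1 - x u"
      using x assms by (simp add: geom_simplex_def)
    obtain z where z: "z \<in> geom_simplex \<tau>" and "x = cone_point u z (x u)"
    proof (cases "x u = 1")
      case True
      obtain v where "v \<in> \<tau>" using assms(2) by blast
      then have "(\<lambda>w. if w = v then 1 else 0) \<in> geom_simplex \<tau>"
        using assms(1) by (auto simp: geom_simplex_def)
      moreover have "x = cone_point u (\<lambda>w. if w = v then 1 else 0) (x u)"
        using True x sum_\<tau> sum_nonneg_eq_0_iff[OF assms(1), of x] assms(3)
        by (auto simp: cone_point_def geom_simplex_def fun_eq_iff)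
      ultimately show ?thesis using that by blast
    next
      case False
      define z where "z = (\<lambda>w. if w = u then 0 else x w / (1 - x u))"
      have "sum z \<tau> = sum x \<tau> / (1 - x u)"
        unfolding sum_divide_distrib using assms(3) by (intro sum.cong) (auto simp: z_def)
      then have "z \<in> geom_simplex \<tau>"
        using x xu False sum_\<tau> by (auto simp: geom_simplex_def z_def)
      moreover have "x = cone_point u z (x u)"
        using False by (auto simp: cone_point_def z_def)
      ultimately show ?thesis using that by blast
    qed
    then show "x \<in> (\<lambda>p. cone_point u (fst p) (snd p)) ` (geom_simplex \<tau> \<times> {0..1})"
      using xu by (auto intro!: image_eqI[of _ _ "(z, x u)"])
  qed
qed

lemma continuous_on_cone_point: "continuous_on S (\<lambda>p. cone_point u (fst p) (snd p))"
  unfolding cone_point_def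
proof (rule continuous_on_coordinatewise_then_product)
  fix w
  have "continuous_on S (\<lambda>p. fst p w)"
    by (rule continuous_on_product_then_coordinatewise[OF continuous_on_fst[OF continuous_on_id]])
  then show "continuous_on S (\<lambda>p. if w = u then snd p else (1 - snd p) * fst p w)"
    by (cases "w = u") (auto intro!: continuous_intros)
qed

lemma quotient_map_cone_point:
  assumes "finite \<tau>" "\<tau> \<noteq> {}" "u \<notin> \<tau>"
  shows "quotient_map (top_of_set (geom_simplex \<tau> \<times> {0..1}))
           (top_of_set (geom_simplex (insert u \<tau>))) (\<lambda>p. cone_point u (fst p) (snd p))"
proof (rule continuous_imp_quotient_map)
  show "continuous_map (top_of_set (geom_simplex \<tau> \<times> {0..1}))
          (top_of_set (geom_simplex (insert u \<tau>))) (\<lambda>p. cone_point u (fst p) (snd p))"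
    using continuous_on_cone_point geom_simplex_insert_eq_cone[OF assms] by auto
  show "compact_space (top_of_set (geom_simplex \<tau> \<times> {0..1::real}))"
    using compact_geom_simplex[OF assms(1)] by (simp add: compact_space_subtopology compact_Times)
  show "Hausdorff_space (top_of_set (geom_simplex (insert u \<tau>)))"
    by (rule Hausdorff_space_subtopology[OF Hausdorff_space_fun])
  show "(\<lambda>p. cone_point u (fst p) (snd p)) ` topspace (top_of_set (geom_simplex \<tau> \<times> {0..1})) =
        topspace (top_of_set (geom_simplex (insert u \<tau>)))"
    using geom_simplex_insert_eq_cone[OF assms] by simp
qed

definition lead_vertex :: "('v \<times> 'v) set \<Rightarrow> ('v \<Rightarrow> real) \<Rightarrow> 'v" where
  "lead_vertex r x = min_vertex r {v. x v \<noteq> 0}"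

text \<open>The point \<open>z\<close> of the opposite face with \<open>x = cone_point (lead_vertex r x) z (x (lead_vertex r x))\<close>.\<close>
definition opposite_face_point :: "('v \<times> 'v) set \<Rightarrow> ('v \<Rightarrow> real) \<Rightarrow> 'v \<Rightarrow> real" where
  "opposite_face_point r x =
     (\<lambda>w. if w = lead_vertex r x then 0 else x w / (1 - x (lead_vertex r x)))"

text \<open>Recursion with fuel: each step deletes the lead vertex from the support, so the number of
  vertices of the support suffices.\<close>
primrec cone_extension_iter ::
  "('v \<times> 'v) set \<Rightarrow> ('v \<Rightarrow> 'b \<times> real \<Rightarrow> 'b) \<Rightarrow> ('v \<Rightarrow> 'b) \<Rightarrow> nat \<Rightarrow> ('v \<Rightarrow> real) \<Rightarrow> 'b" where
  "cone_extension_iter r H P 0 x = P (lead_vertex r x)"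
| "cone_extension_iter r H P (Suc n) x =
     (if x (lead_vertex r x) = 1 then P (lead_vertex r x)
      else H (lead_vertex r x) (cone_extension_iter r H P n (opposite_face_point r x), x (lead_vertex r x)))"

definition cone_extension ::
  "('v \<times> 'v) set \<Rightarrow> ('v \<Rightarrow> 'b \<times> real \<Rightarrow> 'b) \<Rightarrow> ('v \<Rightarrow> 'b) \<Rightarrow> ('v \<Rightarrow> real) \<Rightarrow> 'b" where
  "cone_extension r H P x = cone_extension_iter r H P (card {v. x v \<noteq> 0}) x"

lemma cone_extension_vertex:
  assumes "(u, u) \<in> r"
  shows "cone_extension r H P (\<lambda>w. if w = u then 1 else 0) = P u"
proof -
  have "{v. (if v = u then 1 else 0::real) \<noteq> 0} = {u}" by auto
  then show ?thesis
    by (simp add: cone_extension_def lead_vertex_def min_vertex_singleton[OF assms])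
qed

lemma cone_extension_cone_point:
  assumes "antisym r" "(u, u) \<in> r" "\<forall>w\<in>\<tau>. (u, w) \<in> r" "finite \<tau>" "u \<notin> \<tau>"
    and "z \<in> geom_simplex \<tau>" "0 < s" "s < 1"
  shows "cone_extension r H P (cone_point u z s) = H u (cone_extension r H P z, s)"
proof -
  have support_z: "{v. z v \<noteq> 0} \<subseteq> \<tau>" using geom_simplex_support[OF assms(6)] .
  then have "finite {v. z v \<noteq> 0}" using assms(4) finite_subset by blast
  moreover have support: "{v. cone_point u z s v \<noteq> 0} = insert u {v. z v \<noteq> 0}"
    using assms(7,8) by (auto simp: cone_point_def)
  ultimately have "card {v. cone_point u z s v \<noteq> 0} = Suc (card {v. z v \<noteq> 0})"
    using support_z assms(5) by (subst support) (auto intro: card_insert_disjoint)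
  moreover have lead: "lead_vertex r (cone_point u z s) = u"
    unfolding lead_vertex_def support
    by (rule min_vertex_eqI) (use assms(1-3) support_z in auto)
  moreover have "opposite_face_point r (cone_point u z s) = z"
    using assms(5,8) support_z unfolding opposite_face_point_def lead
    by (auto simp: cone_point_def fun_eq_iff)
  ultimately show ?thesis
    using assms(8) by (simp add: cone_extension_def cone_point_def)
qed

locale contraction_data =
  fixes V :: "'v set" and r :: "('v \<times> 'v) set" and Y :: "'b topology"
    and \<Phi> \<Psi> :: "'v \<Rightarrow> 'b set" and H :: "'v \<Rightarrow> 'b \<times> real \<Rightarrow> 'b" and P :: "'v \<Rightarrow> 'b"
  assumes r_trans: "trans r" and r_antisym: "antisym r"
    and Psi_subset_Phi: "\<And>u v. u \<in> V \<Longrightarrow> v \<in> V \<Longrightarrow> (u, v) \<in> r \<Longrightarrow> u \<noteq> v \<Longrightarrow> \<Psi> v \<subseteq> \<Phi> u"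
    and homotopy_continuous: "\<And>u. u \<in> V \<Longrightarrow> continuous_map
          (prod_topology (subtopology Y (\<Phi> u)) (top_of_set {0..1})) (subtopology Y (\<Psi> u)) (H u)"
    and homotopy_0: "\<And>u y. u \<in> V \<Longrightarrow> y \<in> \<Phi> u \<Longrightarrow> H u (y, 0) = y"
    and homotopy_1: "\<And>u y. u \<in> V \<Longrightarrow> y \<in> \<Phi> u \<Longrightarrow> H u (y, 1) = P u"
    and contraction_point: "\<And>u. u \<in> V \<Longrightarrow> P u \<in> topspace Y \<inter> \<Psi> u"
begin

abbreviation "h \<equiv> cone_extension r H P"

lemma cone_extension_on_cone:
  assumes "finite \<tau>" "\<tau> \<noteq> {}" "u \<in> V" "u \<notin> \<tau>" "(u, u) \<in> r" "\<forall>w\<in>\<tau>. (u, w) \<in> r"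
    and cont: "continuous_map (top_of_set (geom_simplex \<tau>)) Y h"
    and into: "h ` geom_simplex \<tau> \<subseteq> \<Phi> u"
  shows "continuous_map (top_of_set (geom_simplex (insert u \<tau>))) Y h \<and>
         h ` geom_simplex (insert u \<tau>) \<subseteq> \<Psi> u"
proof -
  define S where "S = geom_simplex \<tau> \<times> {0..1::real}"
  define q where "q = (\<lambda>p. cone_point u (fst p) (snd p))"
  define g :: "('v \<Rightarrow> real) \<times> real \<Rightarrow> 'b \<times> real" where "g = (\<lambda>p. (h (fst p), snd p))"
  have "continuous_map (top_of_set (geom_simplex \<tau>)) (subtopology Y (\<Phi> u)) h"
    using cont into by (auto simp: continuous_map_in_subtopology)
  then have g_cont: "continuous_map (top_of_set S)
      (prod_topology (subtopology Y (\<Phi> u)) (top_of_set {0..1})) g"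
    unfolding S_def g_def prod_topology_subtopology_eu[symmetric]
    by (intro continuous_map_pairedI continuous_map_compose[OF continuous_map_fst, unfolded o_def]
          continuous_map_snd)
  have h_q: "h (q p) = H u (g p)" if "p \<in> S" for p
  proof -
    obtain z s where p: "p = (z, s)" "z \<in> geom_simplex \<tau>" "0 \<le> s" "s \<le> 1"
      using \<open>p \<in> S\<close> by (auto simp: S_def)
    have hz: "h z \<in> \<Phi> u" using into p(2) by blast
    consider "s = 0" | "s = 1" | "0 < s" "s < 1" using p by linarith
    then show ?thesis
    proof cases
      case 1
      have "z u = 0" using p(2) assms(4) by (auto simp: geom_simplex_def)
      then have "q p = z" using 1 p by (auto simp: q_def cone_point_def)
      then show ?thesis using 1 p homotopy_0[OF assms(3) hz] by (simp add: g_def)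
    next
      case 2
      then have "q p = (\<lambda>w. if w = u then 1 else 0)" using p by (auto simp: q_def cone_point_def)
      then show ?thesis
        using 2 p cone_extension_vertex[OF assms(5)] homotopy_1[OF assms(3) hz] by (simp add: g_def)
    next
      case 3
      then show ?thesis
        using p cone_extension_cone_point[OF r_antisym assms(5,6,1,4)] by (simp add: q_def g_def)
    qed
  qed
  have simplex_eq: "geom_simplex (insert u \<tau>) = q ` S"
    unfolding q_def S_def by (rule geom_simplex_insert_eq_cone[OF assms(1,2,4)])
  have "continuous_map (top_of_set S) Y (H u \<circ> g)"
    using continuous_map_compose[OF g_cont homotopy_continuous[OF assms(3)]]
    by (simp add: continuous_map_in_subtopology)
  then have "continuous_map (top_of_set S) Y (h \<circ> q)"
    by (rule continuous_map_eq) (simp add: h_q)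
  then have "continuous_map (top_of_set (geom_simplex (insert u \<tau>))) Y h"
    using continuous_compose_quotient_map quotient_map_cone_point[OF assms(1,2,4)]
    unfolding q_def S_def by blast
  moreover have "H u (g p) \<in> \<Psi> u" if "p \<in> S" for p
    using continuous_map_image_subset_topspace[OF continuous_map_compose[OF g_cont
          homotopy_continuous[OF assms(3)]]] that by auto
  ultimately show ?thesis
    unfolding simplex_eq using h_q by auto
qed

lemma cone_extension_on_chain:
  assumes "finite \<sigma>" "\<sigma> \<noteq> {}" "\<sigma> \<subseteq> V" "\<forall>u\<in>\<sigma>. \<forall>v\<in>\<sigma>. (u, v) \<in> r \<or> (v, u) \<in> r"
  shows "continuous_map (top_of_set (geom_simplex \<sigma>)) Y h \<and>
         h ` geom_simplex \<sigma> \<subseteq> \<Psi> (min_vertex r \<sigma>)"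
  using assms
proof (induction "card \<sigma>" arbitrary: \<sigma> rule: less_induct)
  case less
  define u where "u = min_vertex r \<sigma>"
  have u: "u \<in> \<sigma>" "\<forall>w\<in>\<sigma>. (u, w) \<in> r" "u \<in> V"
    using min_vertex_least[OF less.prems(1,2) r_trans r_antisym less.prems(4)] less.prems(3)
    by (auto simp: u_def)
  show ?case
  proof (cases "\<sigma> = {u}")
    case True
    then have "geom_simplex \<sigma> = {\<lambda>w. if w = u then 1 else 0}"
      and "h (\<lambda>w. if w = u then 1 else 0) = P u"
      using geom_simplex_singleton cone_extension_vertex u(1,2) by simp_all
    then show ?thesis
      using contraction_point[OF u(3)] u_def
      by (auto intro: continuous_map_eq[of _ _ "\<lambda>_. P u"])
  next
    case False
    define \<tau> where "\<tau> = \<sigma> - {u}"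
    have \<tau>: "finite \<tau>" "\<tau> \<noteq> {}" "\<tau> \<subseteq> V" "\<forall>v\<in>\<tau>. \<forall>w\<in>\<tau>. (v, w) \<in> r \<or> (w, v) \<in> r"
      using less.prems False u(1) by (auto simp: \<tau>_def)
    have "card \<tau> < card \<sigma>"
      unfolding \<tau>_def by (rule card_Diff1_less[OF less.prems(1) u(1)])
    note IH = less.hyps[OF this \<tau>]
    have "min_vertex r \<tau> \<in> \<tau>"
      using min_vertex_least(1)[OF \<tau>(1,2) r_trans r_antisym \<tau>(4)] .
    then have "min_vertex r \<tau> \<in> V" "(u, min_vertex r \<tau>) \<in> r" "u \<noteq> min_vertex r \<tau>"
      using \<tau>(3) u(2) by (auto simp: \<tau>_def)
    then have "\<Psi> (min_vertex r \<tau>) \<subseteq> \<Phi> u"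
      using Psi_subset_Phi[OF u(3)] by blast
    with IH have "h ` geom_simplex \<tau> \<subseteq> \<Phi> u" by blast
    moreover have "u \<notin> \<tau>" "(u, u) \<in> r" "\<forall>w\<in>\<tau>. (u, w) \<in> r" "\<sigma> = insert u \<tau>"
      using u(1,2) by (auto simp: \<tau>_def)
    ultimately have "continuous_map (top_of_set (geom_simplex \<sigma>)) Y h \<and> h ` geom_simplex \<sigma> \<subseteq> \<Psi> u"
      using cone_extension_on_cone[OF \<tau>(1,2) u(3)] IH by simp
    then show ?thesis unfolding u_def .
  qed
qed

end

lemma istopology_whitehead:
  "istopology (\<lambda>U. U \<subseteq> realisation K \<and>
     (\<forall>\<sigma>\<in>K. openin (top_of_set (geom_simplex \<sigma>)) (U \<inter> geom_simplex \<sigma>)))"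
proof -
  have Int: "openin (top_of_set X) (S \<inter> T \<inter> X)"
    if "openin (top_of_set X) (S \<inter> X)" "openin (top_of_set X) (T \<inter> X)" for X S T :: "('a \<Rightarrow> real) set"
  proof -
    have "S \<inter> T \<inter> X = (S \<inter> X) \<inter> (T \<inter> X)" by blast
    then show ?thesis using openin_Int[OF that] by simp
  qed
  have Union: "openin (top_of_set X) (\<Union>\<U> \<inter> X)"
    if "\<forall>U\<in>\<U>. openin (top_of_set X) (U \<inter> X)" for X :: "('a \<Rightarrow> real) set" and \<U>
  proof -
    have "\<Union>\<U> \<inter> X = \<Union>((\<lambda>U. U \<inter> X) ` \<U>)" by blast
    then show ?thesis by (simp only:) (rule openin_Union, use that in auto)
  qed
  show ?thesis
    unfolding istopology_def
    by (intro conjI allI impI ballI Int Union) auto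
qed

lemma openin_whitehead_topology:
  "openin (whitehead_topology K) U \<longleftrightarrow> U \<subseteq> realisation K \<and>
     (\<forall>\<sigma>\<in>K. openin (top_of_set (geom_simplex \<sigma>)) (U \<inter> geom_simplex \<sigma>))"
  by (simp add: whitehead_topology_def istopology_whitehead)

lemma topspace_whitehead_topology: "topspace (whitehead_topology K) = realisation K"
proof
  show "topspace (whitehead_topology K) \<subseteq> realisation K"
    using openin_topspace[of "whitehead_topology K"] openin_whitehead_topology by blast
  have "openin (whitehead_topology K) (realisation K)"
  proof -
    have "realisation K \<inter> geom_simplex \<sigma> = geom_simplex \<sigma>" if "\<sigma> \<in> K" for \<sigma>
      using that by (auto simp: realisation_def)
    then show ?thesis by (simp add: openin_whitehead_topology)
  qed
  then show "realisation K \<subseteq> topspace (whitehead_topology K)"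
    by (rule openin_subset)
qed

lemma continuous_map_whitehead_topology:
  assumes cont: "\<And>\<sigma>. \<sigma> \<in> K \<Longrightarrow> continuous_map (top_of_set (geom_simplex \<sigma>)) Y f"
  shows "continuous_map (whitehead_topology K) Y f"
  unfolding continuous_map_def topspace_whitehead_topology
proof (intro conjI allI impI)
  show "f \<in> realisation K \<rightarrow> topspace Y"
  proof
    fix x assume "x \<in> realisation K"
    then obtain \<sigma> where "\<sigma> \<in> K" "x \<in> geom_simplex \<sigma>" by (auto simp: realisation_def)
    then show "f x \<in> topspace Y"
      using continuous_map_image_subset_topspace[OF cont] by fastforce
  qed
  fix U assume U: "openin Y U"
  have "openin (top_of_set (geom_simplex \<sigma>)) ({x \<in> realisation K. f x \<in> U} \<inter> geom_simplex \<sigma>)"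
    if "\<sigma> \<in> K" for \<sigma>
  proof -
    have "{x \<in> realisation K. f x \<in> U} \<inter> geom_simplex \<sigma> =
        {x \<in> topspace (top_of_set (geom_simplex \<sigma>)). f x \<in> U}"
      using that by (auto simp: realisation_def)
    then show ?thesis
      using openin_continuous_map_preimage[OF cont[OF that] U] by simp
  qed
  then show "openin (whitehead_topology K) {x \<in> realisation K. f x \<in> U}"
    unfolding openin_whitehead_topology by (intro conjI) auto
qed

theorem theorem3p1:
  fixes K :: "'v set set" and r :: "('v \<times> 'v) set"
    and Y :: "'b topology" and \<Phi> \<Psi> :: "'v \<Rightarrow> 'b set"
  assumes "abstract_simplicial_complex K"
    and "oriented K r"
    and "\<And>v. v \<in> vertices K \<Longrightarrow> \<Phi> v \<noteq> {} \<and> \<Phi> v \<subseteq> topspace Y"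
    and "\<And>v. v \<in> vertices K \<Longrightarrow> \<Psi> v \<noteq> {} \<and> \<Psi> v \<subseteq> topspace Y"
    and "\<And>v. v \<in> vertices K \<Longrightarrow> \<Phi> v \<subseteq> \<Psi> v"
    and "\<And>v. v \<in> vertices K \<Longrightarrow> contractible_in Y (\<Phi> v) (\<Psi> v)"
    and "\<And>u v. u \<in> vertices K \<Longrightarrow> v \<in> vertices K \<Longrightarrow> (u, v) \<in> r \<Longrightarrow> u \<noteq> v \<Longrightarrow> \<Psi> v \<subseteq> \<Phi> u"
  shows "\<exists>h. continuous_map (whitehead_topology K) Y h \<and>
             (\<forall>\<sigma>\<in>K. h ` geom_simplex \<sigma> \<subseteq> \<Psi> (min_vertex r \<sigma>))"
proof -
  have "\<forall>v\<in>vertices K. \<exists>H p. p \<in> \<Psi> v \<and>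
      continuous_map (prod_topology (subtopology Y (\<Phi> v)) (top_of_set {0..1::real})) (subtopology Y (\<Psi> v)) H \<and>
      (\<forall>y\<in>\<Phi> v. H (y, 0) = y \<and> H (y, 1) = p)"
    using assms(6) unfolding contractible_in_def by blast
  then obtain H P where HP: "\<And>v. v \<in> vertices K \<Longrightarrow> P v \<in> \<Psi> v \<and>
      continuous_map (prod_topology (subtopology Y (\<Phi> v)) (top_of_set {0..1::real})) (subtopology Y (\<Psi> v)) (H v) \<and>
      (\<forall>y\<in>\<Phi> v. H v (y, 0) = y \<and> H v (y, 1) = P v)"
    by metis
  have "partial_order_on (vertices K) r"
    using assms(2) by (simp add: oriented_def)
  then have "trans r" "antisym r"
    by (simp_all add: partial_order_on_def preorder_on_def)
  then interpret contraction_data "vertices K" r Y \<Phi> \<Psi> H P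
    by unfold_locales (use HP assms(4,7) in \<open>blast+\<close>)
  have simplex: "finite \<sigma>" "\<sigma> \<noteq> {}" "\<sigma> \<subseteq> vertices K" "\<forall>u\<in>\<sigma>. \<forall>v\<in>\<sigma>. (u, v) \<in> r \<or> (v, u) \<in> r"
    if "\<sigma> \<in> K" for \<sigma>
    using assms(1,2) that unfolding abstract_simplicial_complex_def oriented_def vertices_def by blast+
  have "continuous_map (top_of_set (geom_simplex \<sigma>)) Y h \<and> h ` geom_simplex \<sigma> \<subseteq> \<Psi> (min_vertex r \<sigma>)"
    if "\<sigma> \<in> K" for \<sigma>
    using cone_extension_on_chain[OF simplex[OF that]] .
  then show ?thesis
    using continuous_map_whitehead_topology[of K Y h] by blast
qed

end
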